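(* Let $f:\mathbb{R}\to\mathbb{R}$ be a real quasi-periodic function, $\mathcal{Q}_0(t)=\exp\left(2i\int_0^tf(\tau)d\tau\right)$ and $\mathcal{Q}_1(t)=\mathcal{Q}_0(t)\int_0^t(\mathcal{Q}_0(\tau)^{-1}-M(\mathcal{Q}_0^{-1}))d\tau$. Assume $M(\mathcal{Q}_0)=M(\mathcal{Q}_1)=0$. Then $$M\left(\mathcal{Q}_1(t)\int_0^t\overline{\mathcal{Q}_0(\tau)}\,d\tau\right)=2\,\overline{M\left(\mathcal{Q}_0(t)\int_0^t\mathcal{Q}_1(\tau)\,d\tau\right)}.$$
   Context: For quasi-periodic $f$, $\mathcal{Q}_0$ and $\mathcal{Q}_1$ are quasi-periodic; $M(h)=\lim_{T\to\infty}\frac1{2T}\int_{-T}^Th(t)dt$ denotes the mean value of a quasi-periodic function $h$. *)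

theory Defs
  imports "HOL-Analysis.Analysis"
begin

text \<open>Vectors of R^n are encoded as nat \<Rightarrow> real,
  with F depending only on the first n coordinates.\<close>
definition quasi_periodic :: "(real \<Rightarrow> 'a::real_normed_vector) \<Rightarrow> bool" where
  "quasi_periodic h \<longleftrightarrow>
     (\<exists>(n::nat) (\<omega>::nat \<Rightarrow> real) (F::(nat \<Rightarrow> real) \<Rightarrow> 'a).
        continuous_on UNIV F \<and>
        (\<forall>x. F x = F (\<lambda>k. if k < n then x k else 0)) \<and>
        (\<forall>x k. k < n \<longrightarrow> F (x(k := x k + 1)) = F x) \<and>
        (\<forall>t. h t = F (\<lambda>k. \<omega> k * t)))"

definition integral0 :: "(real \<Rightarrow> 'a::euclidean_space) \<Rightarrow> real \<Rightarrow> 'a" where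
  "integral0 g t = (if 0 \<le> t then integral {0..t} g else - integral {t..0} g)"

definition mean_value :: "(real \<Rightarrow> 'a::euclidean_space) \<Rightarrow> 'a" where
  "mean_value h = Lim at_top (\<lambda>T. (1 / (2 * T)) *\<^sub>R integral {-T..T} h)"

end

theory Submission
  imports Defs
begin

(* Since |Q0| = 1 we have 1/Q0 = cnj Q0, hence M(1/Q0) = cnj M(Q0) = 0 and Q1 = Q0 P with
   P = \<integral>_0^t cnj Q0.  Put W = cnj P and G = \<integral>_0^t Q1: then W' = Q0, W is bounded since |P| = |Q1|,
   G' = Q1 = Q0 cnj W, and G(\<plusminus>T)/T \<rightarrow> M(Q1) = 0.  The function D = W (|W|^2 - 2 G) has derivative
   cnj (Q1 P) - 2 Q0 G and D(\<plusminus>T)/T \<rightarrow> 0, so averaging over [-T, T] gives M(Q1 P) = 2 cnj M(Q0 G),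
   provided the mean of Q1 P exists.  That is Bohr's theory: a quasi-periodic function is almost
   periodic with respect to its finitely many frequencies, Q1 P = Q1 cnj Q0 Q1 is almost periodic
   with respect to the union of two frequency sets, and a bounded continuous function whose
   \<epsilon>-translation numbers are relatively dense for every \<epsilon> has a mean value. *)

section \<open>Almost periodicity with respect to finitely many frequencies\<close>

definition translation_number :: "(real \<Rightarrow> 'a::real_normed_vector) \<Rightarrow> real \<Rightarrow> real \<Rightarrow> bool" where
  "translation_number h \<epsilon> \<tau> \<longleftrightarrow> (\<forall>t. norm (h (t + \<tau>) - h t) \<le> \<epsilon>)"

definition near_common_period :: "real set \<Rightarrow> real \<Rightarrow> real \<Rightarrow> bool" where
  "near_common_period \<Omega> \<delta> \<tau> \<longleftrightarrow> (\<forall>\<omega>\<in>\<Omega>. \<exists>m::int. \<bar>\<omega> * \<tau> - of_int m\<bar> \<le> \<delta>)"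

definition relatively_dense :: "real set \<Rightarrow> bool" where
  "relatively_dense S \<longleftrightarrow> (\<exists>L. \<forall>a. \<exists>\<tau>\<in>S. a \<le> \<tau> \<and> \<tau> \<le> a + L)"

definition almost_periodic_wrt :: "real set \<Rightarrow> (real \<Rightarrow> 'a::real_normed_vector) \<Rightarrow> bool" where
  "almost_periodic_wrt \<Omega> h \<longleftrightarrow> finite \<Omega> \<and>
     (\<forall>\<epsilon>>0. \<exists>\<delta>>0. \<forall>\<tau>. near_common_period \<Omega> \<delta> \<tau> \<longrightarrow> translation_number h \<epsilon> \<tau>)"

lemma relatively_dense_mono: "relatively_dense S \<Longrightarrow> S \<subseteq> T \<Longrightarrow> relatively_dense T"
  unfolding relatively_dense_def by blast

lemma abs_diff_less_of_floor_mult_eq: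
  fixes u v M :: real
  assumes "M > 0" "\<lfloor>u * M\<rfloor> = \<lfloor>v * M\<rfloor>"
  shows "\<bar>u - v\<bar> < 1 / M"
proof -
  have "\<bar>u * M - v * M\<bar> < 1"
    using assms(2) floor_correct[of "u * M"] floor_correct[of "v * M"] by linarith
  also have "\<bar>u * M - v * M\<bar> = \<bar>u - v\<bar> * M"
    using assms(1) by (metis abs_of_pos abs_mult left_diff_distrib)
  finally show ?thesis
    using assms(1) by (simp add: field_simps)
qed

text \<open>Pigeonhole: the cells of the fractional parts of \<open>\<omega> t\<close>, \<open>\<omega> \<in> \<Omega>\<close>, form a finite set; if
  \<open>r\<close> lies in the same cell as \<open>-s\<close> then \<open>s + r\<close> is a near common period, and \<open>r\<close> can be
  taken from a fixed finite set of representatives.\<close>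
lemma relatively_dense_near_common_periods:
  assumes "finite \<Omega>" "\<delta> > 0"
  shows "relatively_dense {\<tau>. near_common_period \<Omega> \<delta> \<tau>}"
proof -
  obtain M :: nat where M_large: "1 / \<delta> < real M"
    using reals_Archimedean2 by blast
  moreover have "1 / \<delta> > 0"
    using \<open>\<delta> > 0\<close> by simp
  ultimately have "real M > 0"
    by linarith
  with M_large have M: "real M > 0" "1 / real M < \<delta>"
    using \<open>\<delta> > 0\<close> by (auto simp: field_simps)
  define cell where "cell t = restrict (\<lambda>\<omega>. \<lfloor>frac (\<omega> * t) * M\<rfloor>) \<Omega>" for t
  have "range cell \<subseteq> PiE \<Omega> (\<lambda>_. {0..<int M})"
  proof -
    have "\<lfloor>frac u * M\<rfloor> \<in> {0..<int M}" for u
    proof -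
      have "frac u * M < M"
        using frac_lt_1[of u] M(1) by simp
      then show ?thesis
        by (simp add: floor_less_iff)
    qed
    then show ?thesis
      unfolding cell_def by (auto simp: restrict_PiE_iff)
  qed
  then have fin: "finite (range cell)"
    by (rule finite_subset) (simp add: finite_PiE assms(1))
  define rep where "rep c = (SOME t. cell t = c)" for c
  have rep: "cell (rep (cell t)) = cell t" for t
    unfolding rep_def by (rule someI) (rule refl)
  define L where "L = Max ((\<lambda>c. \<bar>rep c\<bar>) ` range cell)"
  have rep_le: "\<bar>rep (cell t)\<bar> \<le> L" for t
    unfolding L_def using fin by (intro Max_ge) auto
  show ?thesis
    unfolding relatively_dense_def
  proof (intro exI allI)
    fix a
    define s where "s = a + L"
    define r where "r = rep (cell (- s))"
    have "near_common_period \<Omega> \<delta> (s + r)"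
      unfolding near_common_period_def
    proof
      fix \<omega> assume "\<omega> \<in> \<Omega>"
      have "cell r \<omega> = cell (- s) \<omega>"
        using rep[of "- s"] by (simp add: r_def)
      then have "\<lfloor>frac (\<omega> * r) * M\<rfloor> = \<lfloor>frac (\<omega> * - s) * M\<rfloor>"
        using \<open>\<omega> \<in> \<Omega>\<close> by (simp add: cell_def)
      then have close: "\<bar>frac (\<omega> * r) - frac (\<omega> * - s)\<bar> < 1 / M"
        using M(1) by (rule abs_diff_less_of_floor_mult_eq[rotated])
      have "\<omega> * (s + r) - of_int (\<lfloor>\<omega> * r\<rfloor> - \<lfloor>\<omega> * - s\<rfloor>)
          = frac (\<omega> * r) - frac (\<omega> * - s)"
        by (simp add: frac_def algebra_simps)
      then have "\<bar>\<omega> * (s + r) - of_int (\<lfloor>\<omega> * r\<rfloor> - \<lfloor>\<omega> * - s\<rfloor>)\<bar> \<le> \<delta>"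
        using close M(2) by simp
      then show "\<exists>m::int. \<bar>\<omega> * (s + r) - of_int m\<bar> \<le> \<delta>" ..
    qed
    moreover have "a \<le> s + r" "s + r \<le> a + 2 * L"
      using rep_le[of "- s"] by (auto simp: s_def r_def)
    ultimately show "\<exists>\<tau>\<in>{\<tau>. near_common_period \<Omega> \<delta> \<tau>}. a \<le> \<tau> \<and> \<tau> \<le> a + 2 * L"
      by blast
  qed
qed

lemma almost_periodic_wrt_relatively_dense:
  assumes "almost_periodic_wrt \<Omega> h" "\<epsilon> > 0"
  shows "relatively_dense {\<tau>. translation_number h \<epsilon> \<tau>}"
proof -
  obtain \<delta> where "\<delta> > 0" and \<delta>: "\<And>\<tau>. near_common_period \<Omega> \<delta> \<tau> \<Longrightarrow> translation_number h \<epsilon> \<tau>"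
    using assms unfolding almost_periodic_wrt_def by blast
  have "relatively_dense {\<tau>. near_common_period \<Omega> \<delta> \<tau>}"
    using assms(1) \<open>\<delta> > 0\<close> unfolding almost_periodic_wrt_def
    by (simp add: relatively_dense_near_common_periods)
  then show ?thesis
    by (rule relatively_dense_mono) (auto intro: \<delta>)
qed

lemma near_common_period_subset:
  "near_common_period \<Omega>' \<delta> \<tau> \<Longrightarrow> \<Omega> \<subseteq> \<Omega>' \<Longrightarrow> near_common_period \<Omega> \<delta> \<tau>"
  unfolding near_common_period_def by blast

lemma near_common_period_mono:
  "near_common_period \<Omega> \<delta> \<tau> \<Longrightarrow> \<delta> \<le> \<delta>' \<Longrightarrow> near_common_period \<Omega> \<delta>' \<tau>"
  unfolding near_common_period_def by (meson order_trans)

lemma almost_periodic_wrt_mono: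
  "almost_periodic_wrt \<Omega> h \<Longrightarrow> \<Omega> \<subseteq> \<Omega>' \<Longrightarrow> finite \<Omega>' \<Longrightarrow> almost_periodic_wrt \<Omega>' h"
  unfolding almost_periodic_wrt_def by (meson near_common_period_subset)

lemma almost_periodic_wrt_cnj:
  "almost_periodic_wrt \<Omega> h \<Longrightarrow> almost_periodic_wrt \<Omega> (\<lambda>t. cnj (h t))"
  unfolding almost_periodic_wrt_def translation_number_def
  by (simp flip: complex_cnj_diff)

lemma almost_periodic_wrt_mult:
  fixes h1 h2 :: "real \<Rightarrow> 'a::real_normed_algebra"
  assumes ap1: "almost_periodic_wrt \<Omega> h1" and ap2: "almost_periodic_wrt \<Omega> h2"
    and bnd1: "\<And>t. norm (h1 t) \<le> B1" and bnd2: "\<And>t. norm (h2 t) \<le> B2"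
  shows "almost_periodic_wrt \<Omega> (\<lambda>t. h1 t * h2 t)"
  unfolding almost_periodic_wrt_def
proof (intro conjI allI impI)
  show "finite \<Omega>" using ap1 by (simp add: almost_periodic_wrt_def)
  fix \<epsilon> :: real assume "\<epsilon> > 0"
  have "B1 \<ge> 0" "B2 \<ge> 0"
    by (rule order_trans[OF norm_ge_zero bnd1], rule order_trans[OF norm_ge_zero bnd2])
  define \<eta> where "\<eta> = \<epsilon> / (B1 + B2 + 1)"
  have "\<eta> > 0" using \<open>\<epsilon> > 0\<close> \<open>B1 \<ge> 0\<close> \<open>B2 \<ge> 0\<close> by (simp add: \<eta>_def)
  obtain \<delta>1 where "\<delta>1 > 0"
    and \<delta>1: "\<And>\<tau>. near_common_period \<Omega> \<delta>1 \<tau> \<Longrightarrow> translation_number h1 \<eta> \<tau>"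
    using ap1 \<open>\<eta> > 0\<close> unfolding almost_periodic_wrt_def by blast
  obtain \<delta>2 where "\<delta>2 > 0"
    and \<delta>2: "\<And>\<tau>. near_common_period \<Omega> \<delta>2 \<tau> \<Longrightarrow> translation_number h2 \<eta> \<tau>"
    using ap2 \<open>\<eta> > 0\<close> unfolding almost_periodic_wrt_def by blast
  show "\<exists>\<delta>>0. \<forall>\<tau>. near_common_period \<Omega> \<delta> \<tau> \<longrightarrow> translation_number (\<lambda>t. h1 t * h2 t) \<epsilon> \<tau>"
  proof (intro exI conjI allI impI)
    show "min \<delta>1 \<delta>2 > 0" using \<open>\<delta>1 > 0\<close> \<open>\<delta>2 > 0\<close> by simp
    fix \<tau> assume near: "near_common_period \<Omega> (min \<delta>1 \<delta>2) \<tau>"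
    have tr1: "translation_number h1 \<eta> \<tau>"
      by (rule \<delta>1[OF near_common_period_mono[OF near min.cobounded1]])
    have tr2: "translation_number h2 \<eta> \<tau>"
      by (rule \<delta>2[OF near_common_period_mono[OF near min.cobounded2]])
    show "translation_number (\<lambda>t. h1 t * h2 t) \<epsilon> \<tau>"
      unfolding translation_number_def
    proof
      fix t
      have "h1 (t + \<tau>) * h2 (t + \<tau>) - h1 t * h2 t
          = h1 (t + \<tau>) * (h2 (t + \<tau>) - h2 t) + (h1 (t + \<tau>) - h1 t) * h2 t"
        by (simp add: algebra_simps)
      then have "norm (h1 (t + \<tau>) * h2 (t + \<tau>) - h1 t * h2 t)
          \<le> norm (h1 (t + \<tau>) * (h2 (t + \<tau>) - h2 t)) + norm ((h1 (t + \<tau>) - h1 t) * h2 t)"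
        by (metis norm_triangle_ineq)
      also have "\<dots> \<le> norm (h1 (t + \<tau>)) * norm (h2 (t + \<tau>) - h2 t) + norm (h1 (t + \<tau>) - h1 t) * norm (h2 t)"
        by (intro add_mono norm_mult_ineq)
      also have "\<dots> \<le> B1 * \<eta> + \<eta> * B2"
      proof (rule add_mono)
        show "norm (h1 (t + \<tau>)) * norm (h2 (t + \<tau>) - h2 t) \<le> B1 * \<eta>"
          using tr2 \<open>B1 \<ge> 0\<close> unfolding translation_number_def by (intro mult_mono bnd1) auto
        show "norm (h1 (t + \<tau>) - h1 t) * norm (h2 t) \<le> \<eta> * B2"
          using tr1 \<open>\<eta> > 0\<close> unfolding translation_number_def by (intro mult_mono bnd2) auto
      qed
      also have "\<dots> \<le> (B1 + B2 + 1) * \<eta>"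
        using \<open>\<eta> > 0\<close> by (simp add: algebra_simps)
      also have "\<dots> = \<epsilon>"
        using \<open>B1 \<ge> 0\<close> \<open>B2 \<ge> 0\<close> by (simp add: \<eta>_def)
      finally show "norm (h1 (t + \<tau>) * h2 (t + \<tau>) - h1 t * h2 t) \<le> \<epsilon>" .
    qed
  qed
qed

section \<open>Quasi-periodic functions\<close>

lemma periodic_shift_int:
  fixes F :: "(nat \<Rightarrow> real) \<Rightarrow> 'a"
  assumes periodic: "\<And>x. F (x(k := x k + 1)) = F x"
  shows "F (x(k := x k + of_int z)) = F x"
proof (induction z rule: int_induct[where k = 0])
  case base
  then show ?case by simp
next
  case (step1 i)
  let ?y = "x(k := x k + of_int i)"
  have eq: "x(k := x k + of_int (i + 1)) = ?y(k := ?y k + 1)"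
    by (simp add: algebra_simps)
  show ?case
    unfolding eq periodic by (rule step1.IH)
next
  case (step2 i)
  let ?y = "x(k := x k + of_int (i - 1))"
  have eq: "x(k := x k + of_int i) = ?y(k := ?y k + 1)"
    by (simp add: algebra_simps)
  have "F ?y = F (?y(k := ?y k + 1))"
    by (rule periodic[symmetric])
  also have "\<dots> = F x"
    unfolding eq[symmetric] by (rule step2.IH)
  finally show ?case .
qed

lemma periodic_shift_ints:
  fixes F :: "(nat \<Rightarrow> real) \<Rightarrow> 'a"
  assumes periodic: "\<And>x k. k < n \<Longrightarrow> F (x(k := x k + 1)) = F x"
  shows "F (\<lambda>k. x k + (if k < n then of_int (d k) else 0)) = F x"
proof -
  have "F (\<lambda>k. x k + (if k < j then of_int (d k) else 0)) = F x" if "j \<le> n" for j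
    using that
  proof (induction j)
    case 0
    then show ?case by simp
  next
    case (Suc j)
    let ?y = "\<lambda>k. x k + (if k < j then of_int (d k) else 0)"
    have "(\<lambda>k. x k + (if k < Suc j then of_int (d k) else 0)) = ?y(j := ?y j + of_int (d j))"
      by (auto simp: fun_eq_iff)
    moreover have "F (?y(j := ?y j + of_int (d j))) = F ?y"
      using Suc.prems by (intro periodic_shift_int periodic) simp
    ultimately show ?case
      using Suc by simp
  qed
  then show ?thesis by simp
qed

lemma periodic_reduce_frac:
  fixes F :: "(nat \<Rightarrow> real) \<Rightarrow> 'a"
  assumes local: "\<And>x. F x = F (\<lambda>k. if k < n then x k else 0)"
    and periodic: "\<And>x k. k < n \<Longrightarrow> F (x(k := x k + 1)) = F x"
  shows "F x = F (\<lambda>k. if k < n then frac (x k) else 0)"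
proof -
  have "(\<lambda>k. if k < n then x k else 0)
      = (\<lambda>k. (if k < n then frac (x k) else 0) + (if k < n then of_int \<lfloor>x k\<rfloor> else 0))"
    by (auto simp: fun_eq_iff frac_def)
  then show ?thesis
    using local[of x] by (simp only: periodic_shift_ints[OF periodic])
qed

lemma compact_box_nat:
  fixes a b :: real
  shows "compact {x :: nat \<Rightarrow> real. \<forall>k. (k < n \<longrightarrow> x k \<in> {a..b}) \<and> (n \<le> k \<longrightarrow> x k = 0)}"
proof -
  have "{x :: nat \<Rightarrow> real. \<forall>k. (k < n \<longrightarrow> x k \<in> {a..b}) \<and> (n \<le> k \<longrightarrow> x k = 0)}
      = PiE UNIV (\<lambda>k. if k < n then {a..b} else {0})"
    by (auto simp: PiE_UNIV_domain Pi_iff not_le split: if_splits)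
  moreover have "compactin (product_topology (\<lambda>i. euclidean) UNIV)
      (PiE UNIV (\<lambda>k. if k < n then {a..b} else {0::real}))"
    by (subst compactin_PiE) auto
  ultimately show ?thesis
    by (simp add: euclidean_product_topology compactin_euclidean_iff)
qed

lemma dist_fun_le_of_components:
  fixes x y :: "nat \<Rightarrow> real"
  assumes "\<And>k. \<bar>x k - y k\<bar> \<le> e"
  shows "dist x y \<le> 2 * e"
proof -
  have geometric: "summable (\<lambda>m. (1/2::real)^m * e)"
    by (intro summable_mult2) (simp add: summable_geometric_iff)
  have "dist x y = (\<Sum>m. (1/2)^m * min (dist (x (from_nat m)) (y (from_nat m))) 1)"
    by (simp add: dist_fun_def)
  also have "\<dots> \<le> (\<Sum>m. (1/2::real)^m * e)"
  proof (rule suminf_le[OF _ _ geometric])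
    show "summable (\<lambda>m. (1/2::real)^m * min (dist (x (from_nat m)) (y (from_nat m))) 1)"
      by (rule summable_comparison_test'[of "\<lambda>n. (1/2)^n"]) (auto simp: summable_geometric_iff)
    show "(1/2::real)^m * min (dist (x (from_nat m)) (y (from_nat m))) 1 \<le> (1/2)^m * e" for m
      using assms[of "from_nat m"] by (intro mult_left_mono) (auto simp: dist_real_def min_le_iff_disj)
  qed
  also have "\<dots> = 2 * e"
    using suminf_geometric[of "1/2::real"] by (simp add: suminf_mult2[symmetric] geometric)
  finally show ?thesis .
qed

text \<open>Reduce \<open>y\<close> to its fractional parts and shift \<open>x\<close> by the same lattice vector: both then
  lie in a fixed compact box, on which \<open>F\<close> is uniformly continuous.\<close>
lemma periodic_uniformly_continuous:
  fixes F :: "(nat \<Rightarrow> real) \<Rightarrow> 'a::metric_space"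
  assumes cont: "continuous_on UNIV F"
    and local: "\<And>x. F x = F (\<lambda>k. if k < n then x k else 0)"
    and periodic: "\<And>x k. k < n \<Longrightarrow> F (x(k := x k + 1)) = F x"
    and "\<epsilon> > 0"
  obtains \<delta> where "\<delta> > 0"
    "\<And>x y. (\<forall>k<n. \<exists>m::int. \<bar>x k - y k - of_int m\<bar> \<le> \<delta>) \<Longrightarrow> dist (F x) (F y) < \<epsilon>"
proof -
  define C where "C = {x :: nat \<Rightarrow> real. \<forall>k. (k < n \<longrightarrow> x k \<in> {-1..2}) \<and> (n \<le> k \<longrightarrow> x k = 0)}"
  have "uniformly_continuous_on C F"
    unfolding C_def by (rule compact_uniformly_continuous[OF continuous_on_subset[OF cont] compact_box_nat]) simp
  then obtain d where "d > 0" and d: "\<And>x y. x \<in> C \<Longrightarrow> y \<in> C \<Longrightarrow> dist x y < d \<Longrightarrow> dist (F x) (F y) < \<epsilon>"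
    unfolding uniformly_continuous_on_def using \<open>\<epsilon> > 0\<close> by metis
  define \<delta> where "\<delta> = min (1/2) (d/3)"
  show ?thesis
  proof (rule that)
    show "\<delta> > 0"
      using \<open>d > 0\<close> by (simp add: \<delta>_def)
    fix x y assume "\<forall>k<n. \<exists>m::int. \<bar>x k - y k - of_int m\<bar> \<le> \<delta>"
    then obtain m :: "nat \<Rightarrow> int" where m: "\<And>k. k < n \<Longrightarrow> \<bar>x k - y k - of_int (m k)\<bar> \<le> \<delta>"
      by metis
    define y' where "y' = (\<lambda>k. if k < n then frac (y k) else 0)"
    define x' where "x' = (\<lambda>k. if k < n then x k - of_int (\<lfloor>y k\<rfloor> + m k) else 0)"
    have Fy: "F y = F y'"
      unfolding y'_def by (rule periodic_reduce_frac[OF local periodic])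
    have "(\<lambda>k. if k < n then x k else 0)
        = (\<lambda>k. x' k + (if k < n then of_int (\<lfloor>y k\<rfloor> + m k) else 0))"
      by (auto simp: x'_def fun_eq_iff)
    then have Fx: "F x = F x'"
      using local[of x] by (simp only: periodic_shift_ints[OF periodic])
    have close: "\<bar>x' k - y' k\<bar> \<le> \<delta>" for k
      using m[of k] \<open>\<delta> > 0\<close> by (auto simp: x'_def y'_def frac_def algebra_simps)
    have "x' \<in> C"
    proof -
      have "x' k \<in> {-1..2}" if "k < n" for k
      proof -
        have "\<bar>x' k - frac (y k)\<bar> \<le> 1/2"
          using close[of k] that by (simp add: y'_def \<delta>_def)
        then show ?thesis
          using frac_ge_0[of "y k"] frac_lt_1[of "y k"] unfolding atLeastAtMost_iff abs_le_iff
          by linarith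
      qed
      then show ?thesis
        by (auto simp: C_def x'_def)
    qed
    moreover have "y' \<in> C"
    proof -
      have "frac (y k) \<in> {-1..2}" for k
        using frac_ge_0[of "y k"] frac_lt_1[of "y k"] unfolding atLeastAtMost_iff by linarith
      then show ?thesis
        by (auto simp: C_def y'_def)
    qed
    moreover have "dist x' y' < d"
      using dist_fun_le_of_components[of x' y' \<delta>, OF close] \<open>d > 0\<close> by (simp add: \<delta>_def)
    ultimately show "dist (F x) (F y) < \<epsilon>"
      unfolding Fx Fy by (rule d)
  qed
qed

lemma quasi_periodic_continuous:
  assumes "quasi_periodic h"
  shows "continuous_on UNIV h"
proof -
  obtain \<omega> and F :: "(nat \<Rightarrow> real) \<Rightarrow> 'a" where "continuous_on UNIV F"
    and h: "\<And>t. h t = F (\<lambda>k. \<omega> k * t)"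
    using assms unfolding quasi_periodic_def by blast
  moreover have "continuous_on UNIV (\<lambda>t::real. \<lambda>k. \<omega> k * t)"
    by (intro continuous_on_coordinatewise_then_product continuous_intros)
  ultimately show ?thesis
    unfolding h by (metis continuous_on_compose2 subset_UNIV)
qed

lemma quasi_periodic_bounded:
  assumes "quasi_periodic h"
  shows "bounded (range h)"
proof -
  obtain n \<omega> and F :: "(nat \<Rightarrow> real) \<Rightarrow> 'a" where cont: "continuous_on UNIV F"
    and local: "\<And>x. F x = F (\<lambda>k. if k < n then x k else 0)"
    and periodic: "\<And>x k. k < n \<Longrightarrow> F (x(k := x k + 1)) = F x"
    and h: "\<And>t. h t = F (\<lambda>k. \<omega> k * t)"
    using assms unfolding quasi_periodic_def by blast
  define C where "C = {x :: nat \<Rightarrow> real. \<forall>k. (k < n \<longrightarrow> x k \<in> {0..1}) \<and> (n \<le> k \<longrightarrow> x k = 0)}"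
  have "h t \<in> F ` C" for t
  proof
    show "h t = F (\<lambda>k. if k < n then frac (\<omega> k * t) else 0)"
      unfolding h by (rule periodic_reduce_frac[OF local periodic])
    show "(\<lambda>k. if k < n then frac (\<omega> k * t) else 0) \<in> C"
      using less_imp_le[OF frac_lt_1] by (auto simp: C_def)
  qed
  moreover have "compact (F ` C)"
    unfolding C_def by (rule compact_continuous_image[OF continuous_on_subset[OF cont] compact_box_nat]) simp
  ultimately show ?thesis
    by (meson compact_imp_bounded bounded_subset image_subsetI)
qed

lemma quasi_periodic_almost_periodic_wrt:
  assumes "quasi_periodic h"
  obtains \<Omega> where "almost_periodic_wrt \<Omega> h"
proof -
  obtain n \<omega> and F :: "(nat \<Rightarrow> real) \<Rightarrow> 'a" where cont: "continuous_on UNIV F"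
    and local: "\<And>x. F x = F (\<lambda>k. if k < n then x k else 0)"
    and periodic: "\<And>x k. k < n \<Longrightarrow> F (x(k := x k + 1)) = F x"
    and h: "\<And>t. h t = F (\<lambda>k. \<omega> k * t)"
    using assms unfolding quasi_periodic_def by blast
  have "almost_periodic_wrt (\<omega> ` {..<n}) h"
    unfolding almost_periodic_wrt_def
  proof (intro conjI allI impI)
    fix \<epsilon> :: real assume "\<epsilon> > 0"
    then obtain \<delta> where "\<delta> > 0" and \<delta>:
      "\<And>x y. (\<forall>k<n. \<exists>m::int. \<bar>x k - y k - of_int m\<bar> \<le> \<delta>) \<Longrightarrow> dist (F x) (F y) < \<epsilon>"
      using periodic_uniformly_continuous[OF cont local periodic] by metis
    have "translation_number h \<epsilon> \<tau>" if "near_common_period (\<omega> ` {..<n}) \<delta> \<tau>" for \<tau>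
      unfolding translation_number_def
    proof
      fix t
      have "\<forall>k<n. \<exists>m::int. \<bar>\<omega> k * (t + \<tau>) - \<omega> k * t - of_int m\<bar> \<le> \<delta>"
        using that by (simp add: near_common_period_def algebra_simps)
      then show "norm (h (t + \<tau>) - h t) \<le> \<epsilon>"
        using \<delta> by (simp add: h dist_norm less_imp_le)
    qed
    then show "\<exists>\<delta>>0. \<forall>\<tau>. near_common_period (\<omega> ` {..<n}) \<delta> \<tau> \<longrightarrow> translation_number h \<epsilon> \<tau>"
      using \<open>\<delta> > 0\<close> by blast
  qed simp
  then show ?thesis ..
qed

text \<open>A product-closed stand-in for quasi-periodicity: the encoding of \<^const>\<open>quasi_periodic\<close>
  by a function on a torus does not combine conveniently for products.\<close>
definition fin_almost_periodic :: "(real \<Rightarrow> 'a::real_normed_vector) \<Rightarrow> bool" where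
  "fin_almost_periodic h \<longleftrightarrow>
     continuous_on UNIV h \<and> bounded (range h) \<and> (\<exists>\<Omega>. almost_periodic_wrt \<Omega> h)"

lemma quasi_periodic_imp_fin_almost_periodic: "quasi_periodic h \<Longrightarrow> fin_almost_periodic h"
  unfolding fin_almost_periodic_def
  by (metis quasi_periodic_continuous quasi_periodic_bounded quasi_periodic_almost_periodic_wrt)

lemma fin_almost_periodic_cnj:
  "fin_almost_periodic h \<Longrightarrow> fin_almost_periodic (\<lambda>t. cnj (h t))"
  unfolding fin_almost_periodic_def
  by (auto intro!: continuous_intros almost_periodic_wrt_cnj simp: bounded_iff image_iff)

lemma fin_almost_periodic_mult:
  fixes h1 h2 :: "real \<Rightarrow> 'a::real_normed_algebra"
  assumes "fin_almost_periodic h1" "fin_almost_periodic h2"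
  shows "fin_almost_periodic (\<lambda>t. h1 t * h2 t)"
proof -
  obtain \<Omega>1 \<Omega>2 B1 B2 where ap: "almost_periodic_wrt \<Omega>1 h1" "almost_periodic_wrt \<Omega>2 h2"
    and bnd: "\<And>t. norm (h1 t) \<le> B1" "\<And>t. norm (h2 t) \<le> B2"
    using assms unfolding fin_almost_periodic_def bounded_iff by auto
  have "finite (\<Omega>1 \<union> \<Omega>2)"
    using ap by (simp add: almost_periodic_wrt_def)
  then have "almost_periodic_wrt (\<Omega>1 \<union> \<Omega>2) (\<lambda>t. h1 t * h2 t)"
    using almost_periodic_wrt_mono[OF ap(1)] almost_periodic_wrt_mono[OF ap(2)]
    by (intro almost_periodic_wrt_mult[OF _ _ bnd]) simp_all
  moreover have "norm (h1 t * h2 t) \<le> B1 * B2" for t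
    using bnd[of t] order_trans[OF norm_ge_zero bnd(1)]
    by (intro order_trans[OF norm_mult_ineq] mult_mono) auto
  ultimately show ?thesis
    using assms unfolding fin_almost_periodic_def bounded_iff
    by (auto intro!: continuous_intros)
qed

section \<open>Existence of mean values\<close>

lemma norm_diff_le_of_vector_derivative_bound:
  fixes H h :: "real \<Rightarrow> 'a::real_normed_vector"
  assumes der: "\<And>t. (H has_vector_derivative h t) (at t)" and bnd: "\<And>t. norm (h t) \<le> B"
  shows "norm (H x - H y) \<le> B * \<bar>x - y\<bar>"
proof -
  have "norm (H x - H y) \<le> B * norm (x - y)"
  proof (rule differentiable_bound[where S = UNIV and f' = "\<lambda>t d. d *\<^sub>R h t"])
    show "(H has_derivative (\<lambda>d. d *\<^sub>R h t)) (at t within UNIV)" for t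
      using der[of t] by (simp add: has_vector_derivative_def)
    show "onorm (\<lambda>d. d *\<^sub>R h t) \<le> B" for t
      using bnd[of t] by (simp add: onorm_scaleR_left[OF bounded_linear_ident] onorm_id)
  qed auto
  then show ?thesis by simp
qed

definition uniform_increments :: "(real \<Rightarrow> 'a::real_normed_vector) \<Rightarrow> bool" where
  "uniform_increments H \<longleftrightarrow> (\<forall>\<epsilon>>0. \<exists>K. \<forall>a b T. 0 \<le> T \<longrightarrow>
     norm ((H (a + T) - H a) - (H (b + T) - H b)) \<le> \<epsilon> * T + K)"

text \<open>Bohr's argument: an \<open>\<epsilon>\<close>-translation number \<open>\<tau>\<close> close to \<open>b - a\<close> moves the window
  \<open>[a, a + T]\<close> onto one within distance \<open>L\<close> of \<open>[b, b + T]\<close>, at a cost of \<open>\<epsilon> T\<close>.\<close>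
lemma uniform_increments_of_translation_numbers:
  fixes H h :: "real \<Rightarrow> 'a::real_normed_vector"
  assumes der: "\<And>t. (H has_vector_derivative h t) (at t)"
    and bnd: "\<And>t. norm (h t) \<le> B"
    and dense: "\<And>\<epsilon>. \<epsilon> > 0 \<Longrightarrow> relatively_dense {\<tau>. translation_number h \<epsilon> \<tau>}"
  shows "uniform_increments H"
  unfolding uniform_increments_def
proof (intro allI impI)
  fix \<epsilon> :: real assume "\<epsilon> > 0"
  obtain L where L: "\<And>a. \<exists>\<tau>. translation_number h \<epsilon> \<tau> \<and> a \<le> \<tau> \<and> \<tau> \<le> a + L"
    using dense[OF \<open>\<epsilon> > 0\<close>] unfolding relatively_dense_def by blast
  have "B \<ge> 0"
    by (rule order_trans[OF norm_ge_zero bnd])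
  note lip = norm_diff_le_of_vector_derivative_bound[OF der bnd]
  have "norm ((H (a + T) - H a) - (H (b + T) - H b)) \<le> \<epsilon> * T + 2 * B * L" if "0 \<le> T" for a b T
  proof -
    obtain \<tau> where tr: "translation_number h \<epsilon> \<tau>" and \<tau>: "b - a \<le> \<tau>" "\<tau> \<le> b - a + L"
      using L by blast
    have shift_der: "((\<lambda>s. H (s + \<tau>) - H s) has_vector_derivative h (s + \<tau>) - h s) (at s)" for s
    proof -
      have "((\<lambda>s. s + \<tau>) has_vector_derivative 1) (at s)"
        by (auto intro!: derivative_eq_intros)
      from vector_diff_chain_at[OF this der[of "s + \<tau>"]]
      have "((\<lambda>s. H (s + \<tau>)) has_vector_derivative h (s + \<tau>)) (at s)"
        by (simp add: o_def)
      then show ?thesis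
        by (intro derivative_intros der)
    qed
    have shifted: "norm ((H (a + T + \<tau>) - H (a + T)) - (H (a + \<tau>) - H a)) \<le> \<epsilon> * \<bar>a + T - a\<bar>"
      by (rule norm_diff_le_of_vector_derivative_bound[OF shift_der])
        (use tr in \<open>simp add: translation_number_def\<close>)
    have "B * \<bar>a + \<tau> - b\<bar> \<le> B * L"
      using \<tau> \<open>B \<ge> 0\<close> by (intro mult_left_mono) auto
    then have near1: "norm (H (a + T + \<tau>) - H (b + T)) \<le> B * L"
      and near2: "norm (H (a + \<tau>) - H b) \<le> B * L"
      using lip[of "a + T + \<tau>" "b + T"] lip[of "a + \<tau>" b] by (simp_all add: algebra_simps)
    have "(H (a + T) - H a) - (H (b + T) - H b)
        = (H (a + T + \<tau>) - H (b + T)) - (H (a + \<tau>) - H b)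
          - ((H (a + T + \<tau>) - H (a + T)) - (H (a + \<tau>) - H a))"
      by (simp add: algebra_simps)
    also have "norm \<dots> \<le> norm (H (a + T + \<tau>) - H (b + T)) + norm (H (a + \<tau>) - H b)
        + norm ((H (a + T + \<tau>) - H (a + T)) - (H (a + \<tau>) - H a))"
      by (rule order_trans[OF norm_triangle_ineq4 add_right_mono[OF norm_triangle_ineq4]])
    finally show ?thesis
      using shifted near1 near2 \<open>0 \<le> T\<close> by simp
  qed
  then show "\<exists>K. \<forall>a b T. 0 \<le> T \<longrightarrow> norm ((H (a + T) - H a) - (H (b + T) - H b)) \<le> \<epsilon> * T + K"
    by blast
qed

lemma increment_multiple_bound:
  fixes H :: "real \<Rightarrow> 'a::real_normed_vector"
  assumes "\<And>a. norm ((H (a + T) - H a) - (H T - H 0)) \<le> K"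
  shows "norm (H (real n * T) - H 0 - real n *\<^sub>R (H T - H 0)) \<le> real n * K"
proof (induction n)
  case 0
  then show ?case by simp
next
  case (Suc n)
  have "H (real (Suc n) * T) - H 0 - real (Suc n) *\<^sub>R (H T - H 0)
      = (H (real n * T) - H 0 - real n *\<^sub>R (H T - H 0))
        + ((H (real n * T + T) - H (real n * T)) - (H T - H 0))"
    by (simp add: algebra_simps)
  also have "norm \<dots> \<le> real n * K + K"
    using Suc.IH assms[of "real n * T"] by (rule order_trans[OF norm_triangle_ineq add_mono])
  finally show ?case
    by (simp add: algebra_simps)
qed

lemma increment_quotient_estimate:
  fixes H :: "real \<Rightarrow> 'a::real_normed_vector"
  assumes lip: "\<And>x y. norm (H x - H y) \<le> B * \<bar>x - y\<bar>"
    and additive: "\<And>a b T. 0 \<le> T \<Longrightarrow> norm ((H (a + T) - H a) - (H (b + T) - H b)) \<le> \<epsilon> * T + K"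
    and T: "0 < T" "T \<le> U"
  shows "norm ((1 / U) *\<^sub>R (H U - H 0) - (1 / T) *\<^sub>R (H T - H 0)) \<le> 2 * B * T / U + \<epsilon> + K / T"
proof -
  define n where "n = nat \<lfloor>U / T\<rfloor>"
  have "U > 0" using T by linarith
  have "U / T \<ge> 1" using T by simp
  then have n: "real n \<le> U / T" "U / T < real n + 1"
    unfolding n_def by linarith+
  then have "real n * T \<le> U" "U < real n * T + T"
    using T by (simp_all add: field_simps)
  have "0 \<le> \<epsilon> * T + K"
    using additive[of T 0 0] T by simp
  define X where "X = H U - H 0 - (U / T) *\<^sub>R (H T - H 0)"
  have "X = (H U - H (real n * T)) + (H (real n * T) - H 0 - real n *\<^sub>R (H T - H 0))
      - (U / T - real n) *\<^sub>R (H T - H 0)"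
    by (simp add: X_def algebra_simps)
  also have "norm \<dots> \<le> B * T + (U / T) * (\<epsilon> * T + K) + B * T"
  proof (rule order_trans[OF norm_triangle_ineq4 add_mono[OF order_trans[OF norm_triangle_ineq add_mono]]])
    have "B \<ge> 0"
      using order_trans[OF norm_ge_zero lip[of 1 0]] by simp
    then have "B * \<bar>U - real n * T\<bar> \<le> B * T"
      using \<open>real n * T \<le> U\<close> \<open>U < real n * T + T\<close> by (intro mult_left_mono) auto
    then show "norm (H U - H (real n * T)) \<le> B * T"
      using lip[of U "real n * T"] by simp
    have "norm (H (real n * T) - H 0 - real n *\<^sub>R (H T - H 0)) \<le> real n * (\<epsilon> * T + K)"
      using additive[where b = 0 and T = T] T by (intro increment_multiple_bound) simp
    also have "\<dots> \<le> (U / T) * (\<epsilon> * T + K)"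
      using n(1) \<open>0 \<le> \<epsilon> * T + K\<close> by (rule mult_right_mono)
    finally show "norm (H (real n * T) - H 0 - real n *\<^sub>R (H T - H 0)) \<le> (U / T) * (\<epsilon> * T + K)" .
    have "norm ((U / T - real n) *\<^sub>R (H T - H 0)) \<le> 1 * (B * T)"
      using n lip[of T 0] T by (simp only: norm_scaleR) (rule mult_mono, auto)
    then show "norm ((U / T - real n) *\<^sub>R (H T - H 0)) \<le> B * T"
      by simp
  qed
  finally have "norm X \<le> 2 * B * T + U * \<epsilon> + K * U / T"
    using T by (simp add: field_simps)
  then have "norm X / U \<le> (2 * B * T + U * \<epsilon> + K * U / T) / U"
    using \<open>U > 0\<close> by (rule divide_right_mono[OF _ less_imp_le])
  also have "\<dots> = 2 * B * T / U + \<epsilon> + K / T"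
    using \<open>U > 0\<close> T by (simp add: field_simps)
  also have "norm X / U = norm ((1 / U) *\<^sub>R (H U - H 0) - (1 / T) *\<^sub>R (H T - H 0))"
  proof -
    have "(1 / U) *\<^sub>R (H U - H 0) - (1 / T) *\<^sub>R (H T - H 0) = (1 / U) *\<^sub>R X"
      using \<open>U > 0\<close> T by (simp add: X_def algebra_simps)
    then show ?thesis
      using \<open>U > 0\<close> by simp
  qed
  finally show ?thesis .
qed

lemma increment_quotient_convergent:
  fixes H :: "real \<Rightarrow> 'a::banach"
  assumes lip: "\<And>x y. norm (H x - H y) \<le> B * \<bar>x - y\<bar>" and uniform: "uniform_increments H"
  obtains c where "((\<lambda>T. (1 / T) *\<^sub>R (H T - H 0)) \<longlongrightarrow> c) at_top"
proof -
  define g where "g T = (1 / T) *\<^sub>R (H T - H 0)" for T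
  have "B \<ge> 0"
    using order_trans[OF norm_ge_zero lip[of 1 0]] by simp
  have "cauchy_filter (filtermap g at_top)"
    unfolding cauchy_filter_metric_filtermap
  proof (intro allI impI)
    fix e :: real assume "e > 0"
    then have "e / 8 > 0" by simp
    then obtain K where K: "\<And>a b T. 0 \<le> T \<Longrightarrow> norm ((H (a + T) - H a) - (H (b + T) - H b)) \<le> e / 8 * T + K"
      using uniform unfolding uniform_increments_def by blast
    have "K \<ge> 0"
      using K[of 0 0 0] by simp
    define T0 where "T0 = max 1 (8 * K / e)"
    define T1 where "T1 = max T0 (16 * B * T0 / e)"
    have "T0 > 0" "K / T0 \<le> e / 8"
      using \<open>e > 0\<close> \<open>K \<ge> 0\<close> by (auto simp: T0_def field_simps max_def)
    have near: "dist (g U) (g T0) \<le> 3 * e / 8" if "T1 \<le> U" for U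
    proof -
      have "T0 \<le> U" "16 * B * T0 / e \<le> U"
        using that by (auto simp: T1_def)
      then have "U > 0" "16 * B * T0 \<le> e * U"
        using \<open>T0 > 0\<close> \<open>e > 0\<close> by (auto simp: field_simps)
      then have "2 * B * T0 / U \<le> e / 8"
        by (simp add: field_simps)
      then show ?thesis
        using increment_quotient_estimate[OF lip K \<open>T0 > 0\<close> \<open>T0 \<le> U\<close>] \<open>K / T0 \<le> e / 8\<close>
        unfolding g_def dist_norm by linarith
    qed
    show "\<exists>P. eventually P at_top \<and> (\<forall>U V. P U \<and> P V \<longrightarrow> dist (g U) (g V) < e)"
    proof (intro exI conjI allI impI)
      show "eventually (\<lambda>U. T1 \<le> U) at_top"
        by (rule eventually_ge_at_top)
      fix U V assume "T1 \<le> U \<and> T1 \<le> V"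
      then show "dist (g U) (g V) < e"
        using near[of U] near[of V] dist_triangle2[of "g U" "g V" "g T0"] \<open>e > 0\<close> by linarith
    qed
  qed
  then obtain c where "filtermap g at_top \<le> nhds c"
    using cauchy_filter_convergent convergent_filter_iff by auto
  then show ?thesis
    using that unfolding filterlim_def g_def by auto
qed

lemma increment_quotients_reflected:
  fixes H :: "real \<Rightarrow> 'a::real_normed_vector"
  assumes uniform: "uniform_increments H"
  shows "((\<lambda>T. (1 / T) *\<^sub>R (H 0 - H (- T)) - (1 / T) *\<^sub>R (H T - H 0)) \<longlongrightarrow> 0) at_top"
proof (rule tendstoI)
  fix e :: real assume "e > 0"
  then have "e / 2 > 0" by simp
  then obtain K where K: "\<And>a b T. 0 \<le> T \<Longrightarrow> norm ((H (a + T) - H a) - (H (b + T) - H b)) \<le> e / 2 * T + K"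
    using uniform unfolding uniform_increments_def by blast
  have "K \<ge> 0"
    using K[of 0 0 0] by simp
  show "eventually (\<lambda>T. dist ((1 / T) *\<^sub>R (H 0 - H (- T)) - (1 / T) *\<^sub>R (H T - H 0)) 0 < e) at_top"
    using eventually_ge_at_top[of "max 1 (4 * K / e)"]
  proof eventually_elim
    case (elim T)
    then have "T > 0" "K / T \<le> e / 4"
      using \<open>e > 0\<close> \<open>K \<ge> 0\<close> by (auto simp: field_simps)
    have "(1 / T) *\<^sub>R (H 0 - H (- T)) - (1 / T) *\<^sub>R (H T - H 0)
        = (1 / T) *\<^sub>R ((H (- T + T) - H (- T)) - (H (0 + T) - H 0))"
      by (simp add: algebra_simps)
    also have "norm \<dots> \<le> (e / 2 * T + K) / T"
      using K[of T "- T" 0] \<open>T > 0\<close> by (simp add: divide_right_mono)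
    also have "\<dots> = e / 2 + K / T"
      using \<open>T > 0\<close> by (simp add: field_simps)
    finally show ?case
      using \<open>K / T \<le> e / 4\<close> \<open>e > 0\<close> unfolding dist_norm diff_zero by linarith
  qed
qed

lemma integral0_0 [simp]: "integral0 g 0 = 0"
  by (simp add: integral0_def)

lemma integral0_has_vector_derivative:
  fixes g :: "real \<Rightarrow> 'a::euclidean_space"
  assumes cont: "continuous_on UNIV g"
  shows "(integral0 g has_vector_derivative g t) (at t)"
proof -
  define c where "c = min 0 t - 1"
  have "c < t" "t < max 0 t + 1" by (auto simp: c_def)
  have int: "g integrable_on {x..y}" for x y
    by (rule integrable_continuous_real) (rule continuous_on_subset[OF cont], simp)
  have "((\<lambda>u. integral {c..u} g) has_vector_derivative g t) (at t within {c..max 0 t + 1})"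
    using \<open>c < t\<close> \<open>t < max 0 t + 1\<close>
    by (intro integral_has_vector_derivative continuous_on_subset[OF cont]) auto
  then have "((\<lambda>u. integral {c..u} g - integral {c..0} g) has_vector_derivative g t) (at t)"
    using at_within_Icc_at[OF \<open>c < t\<close> \<open>t < max 0 t + 1\<close>] by (auto intro!: derivative_eq_intros)
  then show ?thesis
  proof (rule has_vector_derivative_transform_within_open)
    show "open {c<..}" "t \<in> {c<..}"
      using \<open>c < t\<close> by auto
    fix y assume "y \<in> {c<..}"
    show "integral {c..y} g - integral {c..0} g = integral0 g y"
    proof (cases "0 \<le> y")
      case True
      have "integral {c..0} g + integral {0..y} g = integral {c..y} g"
        using True by (intro Henstock_Kurzweil_Integration.integral_combine int) (auto simp: c_def)
      then show ?thesis
        using True unfolding integral0_def by (simp add: algebra_simps)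
    next
      case False
      have "integral {c..y} g + integral {y..0} g = integral {c..0} g"
        using False \<open>y \<in> {c<..}\<close> by (intro Henstock_Kurzweil_Integration.integral_combine int) auto
      then show ?thesis
        using False unfolding integral0_def by (simp add: algebra_simps)
    qed
  qed
qed

definition average :: "(real \<Rightarrow> 'a::euclidean_space) \<Rightarrow> real \<Rightarrow> 'a" where
  "average h T = (1 / (2 * T)) *\<^sub>R integral {-T..T} h"

lemma mean_value_eqI: "(average h \<longlongrightarrow> c) at_top \<Longrightarrow> mean_value h = c"
  unfolding mean_value_def average_def[abs_def] by (rule tendsto_Lim) simp_all

lemma average_eq_integral0:
  fixes h :: "real \<Rightarrow> 'a::euclidean_space"
  assumes "continuous_on UNIV h" "0 < T"
  shows "average h T = (1 / 2) *\<^sub>R ((1 / T) *\<^sub>R integral0 h T - (1 / T) *\<^sub>R integral0 h (- T))"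
proof -
  have "integral {-T..0} h + integral {0..T} h = integral {-T..T} h"
    using assms
    by (intro Henstock_Kurzweil_Integration.integral_combine integrable_continuous_real
        continuous_on_subset[OF assms(1)]) auto
  then show ?thesis
    using \<open>0 < T\<close> by (simp add: average_def integral0_def algebra_simps flip: scaleR_add_right)
qed

lemma average_cnj: "average (\<lambda>t. cnj (h t)) = (\<lambda>T. cnj (average h T))"
  by (simp add: fun_eq_iff average_def integral_cnj complex_cnj_scaleR)

lemma mean_of_relatively_dense_translations:
  fixes h :: "real \<Rightarrow> 'a::euclidean_space"
  assumes cont: "continuous_on UNIV h" and bounded: "bounded (range h)"
    and dense: "\<And>\<epsilon>. \<epsilon> > 0 \<Longrightarrow> relatively_dense {\<tau>. translation_number h \<epsilon> \<tau>}"
  obtains c where "((\<lambda>T. (1 / T) *\<^sub>R integral0 h T) \<longlongrightarrow> c) at_top"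
    "((\<lambda>T. (1 / T) *\<^sub>R integral0 h (- T)) \<longlongrightarrow> - c) at_top"
    "(average h \<longlongrightarrow> c) at_top"
proof -
  obtain B where bnd: "\<And>t. norm (h t) \<le> B"
    using bounded by (auto simp: bounded_iff)
  define H where "H = integral0 h"
  have der: "(H has_vector_derivative h t) (at t)" for t
    unfolding H_def using cont by (rule integral0_has_vector_derivative)
  note lip = norm_diff_le_of_vector_derivative_bound[OF der bnd]
  have uniform: "uniform_increments H"
    using der bnd dense by (rule uniform_increments_of_translation_numbers)
  obtain c where c: "((\<lambda>T. (1 / T) *\<^sub>R (H T - H 0)) \<longlongrightarrow> c) at_top"
    using increment_quotient_convergent[OF lip uniform] by blast
  have "((\<lambda>T. ((1 / T) *\<^sub>R (H 0 - H (- T)) - (1 / T) *\<^sub>R (H T - H 0)) + (1 / T) *\<^sub>R (H T - H 0))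
      \<longlongrightarrow> 0 + c) at_top"
    by (intro tendsto_add increment_quotients_reflected uniform c)
  then have "((\<lambda>T. - ((1 / T) *\<^sub>R H (- T))) \<longlongrightarrow> c) at_top"
    by (simp add: H_def)
  then have minus: "((\<lambda>T. (1 / T) *\<^sub>R H (- T)) \<longlongrightarrow> - c) at_top"
    using tendsto_minus by fastforce
  have plus: "((\<lambda>T. (1 / T) *\<^sub>R H T) \<longlongrightarrow> c) at_top"
    using c by (simp add: H_def)
  have "((\<lambda>T. (1 / 2) *\<^sub>R ((1 / T) *\<^sub>R H T - (1 / T) *\<^sub>R H (- T))) \<longlongrightarrow> (1 / 2) *\<^sub>R (c - - c)) at_top"
    by (intro tendsto_intros plus minus)
  moreover have "eventually (\<lambda>T. (1 / 2) *\<^sub>R ((1 / T) *\<^sub>R H T - (1 / T) *\<^sub>R H (- T)) = average h T) at_top"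
    using eventually_gt_at_top[of 0] by eventually_elim (simp add: H_def average_eq_integral0[OF cont])
  ultimately have "(average h \<longlongrightarrow> c) at_top"
    by (simp add: tendsto_cong)
  with plus minus show ?thesis
    unfolding H_def by (rule that)
qed

lemma fin_almost_periodic_mean:
  fixes h :: "real \<Rightarrow> 'a::euclidean_space"
  assumes "fin_almost_periodic h"
  shows "((\<lambda>T. (1 / T) *\<^sub>R integral0 h T) \<longlongrightarrow> mean_value h) at_top"
    and "((\<lambda>T. (1 / T) *\<^sub>R integral0 h (- T)) \<longlongrightarrow> - mean_value h) at_top"
    and "(average h \<longlongrightarrow> mean_value h) at_top"
proof -
  obtain \<Omega> where ap: "almost_periodic_wrt \<Omega> h"
    and cont: "continuous_on UNIV h" and bounded: "bounded (range h)"
    using assms unfolding fin_almost_periodic_def by blast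
  obtain c where "((\<lambda>T. (1 / T) *\<^sub>R integral0 h T) \<longlongrightarrow> c) at_top"
    "((\<lambda>T. (1 / T) *\<^sub>R integral0 h (- T)) \<longlongrightarrow> - c) at_top" and avg: "(average h \<longlongrightarrow> c) at_top"
    using mean_of_relatively_dense_translations[OF cont bounded almost_periodic_wrt_relatively_dense[OF ap]]
    by blast
  moreover have "mean_value h = c"
    using avg by (rule mean_value_eqI)
  ultimately show "((\<lambda>T. (1 / T) *\<^sub>R integral0 h T) \<longlongrightarrow> mean_value h) at_top"
    "((\<lambda>T. (1 / T) *\<^sub>R integral0 h (- T)) \<longlongrightarrow> - mean_value h) at_top"
    "(average h \<longlongrightarrow> mean_value h) at_top"
    by simp_all
qed

section \<open>The mean-value identity\<close>

lemma tendsto_bounded_mult_zero: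
  fixes w g :: "'b \<Rightarrow> 'a::real_normed_algebra"
  assumes "\<And>x. norm (w x) \<le> K" "(g \<longlongrightarrow> 0) F"
  shows "((\<lambda>x. w x * g x) \<longlongrightarrow> 0) F"
proof (rule Lim_null_comparison)
  show "eventually (\<lambda>x. norm (w x * g x) \<le> K * norm (g x)) F"
    using assms(1) by (intro always_eventually allI order_trans[OF norm_mult_ineq] mult_right_mono) auto
  show "((\<lambda>x. K * norm (g x)) \<longlongrightarrow> 0) F"
    using tendsto_mult_right_zero[OF tendsto_norm_zero[OF assms(2)]] .
qed

lemma tendsto_cubic_quotient_zero:
  fixes w g :: "real \<Rightarrow> complex"
  assumes w: "\<And>T. norm (w T) \<le> K" and g: "((\<lambda>T. (1 / T) *\<^sub>R g T) \<longlongrightarrow> 0) at_top"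
  shows "((\<lambda>T. (1 / T) *\<^sub>R (w T * (w T * cnj (w T) - 2 * g T))) \<longlongrightarrow> 0) at_top"
proof -
  have "K \<ge> 0"
    by (rule order_trans[OF norm_ge_zero w])
  have "((\<lambda>T. (w T * w T * cnj (w T)) * of_real (1 / T)) \<longlongrightarrow> 0) at_top"
  proof (rule tendsto_bounded_mult_zero)
    show "norm (w T * w T * cnj (w T)) \<le> K * K * K" for T
      using w[of T] \<open>K \<ge> 0\<close> by (simp add: norm_mult mult_mono)
    have "((\<lambda>T. 1 / T) \<longlongrightarrow> (0::real)) at_top"
      by (rule tendsto_divide_0[OF tendsto_const filterlim_at_top_imp_at_infinity[OF filterlim_ident]])
    then show "((\<lambda>T. complex_of_real (1 / T)) \<longlongrightarrow> 0) at_top"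
      using tendsto_of_real[where 'a = complex] by fastforce
  qed
  moreover have "((\<lambda>T. (2 * w T) * ((1 / T) *\<^sub>R g T)) \<longlongrightarrow> 0) at_top"
    by (rule tendsto_bounded_mult_zero[OF _ g, of _ "2 * K"]) (simp add: norm_mult w)
  ultimately have "((\<lambda>T. (w T * w T * cnj (w T)) * of_real (1 / T) - (2 * w T) * ((1 / T) *\<^sub>R g T))
      \<longlongrightarrow> 0 - 0) at_top"
    by (rule tendsto_diff)
  then show ?thesis
    by (simp add: scaleR_conv_of_real algebra_simps)
qed

text \<open>Integration by parts in disguise: \<open>D = W (\<bar>W\<bar>\<^sup>2 - 2 G)\<close> has derivative
  \<open>cnj (q cnj W\<^sup>2) - 2 q G\<close> because \<open>G' = q cnj W\<close>, and \<open>D(\<plusminus>T) / T \<rightarrow> 0\<close>.\<close>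
lemma average_antiderivative_identity:
  fixes q W G :: "real \<Rightarrow> complex"
  assumes q: "continuous_on UNIV q"
    and W: "\<And>t. (W has_vector_derivative q t) (at t)" and W_bound: "\<And>t. norm (W t) \<le> K"
    and G: "\<And>t. (G has_vector_derivative q t * cnj (W t)) (at t)"
    and G_pos: "((\<lambda>T. (1 / T) *\<^sub>R G T) \<longlongrightarrow> 0) at_top"
    and G_neg: "((\<lambda>T. (1 / T) *\<^sub>R G (- T)) \<longlongrightarrow> 0) at_top"
    and A: "(average (\<lambda>t. q t * cnj (W t) ^ 2) \<longlongrightarrow> c) at_top"
  shows "(average (\<lambda>t. q t * G t) \<longlongrightarrow> cnj c / 2) at_top"
proof -
  define D where "D t = W t * (W t * cnj (W t) - 2 * G t)" for t
  have D_der: "(D has_vector_derivative cnj (q t * cnj (W t) ^ 2) - 2 * (q t * G t)) (at t)" for t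
  proof -
    have "(D has_vector_derivative W t * ((W t * cnj (q t) + q t * cnj (W t))
        - (2 * (q t * cnj (W t)) + 0 * G t)) + q t * (W t * cnj (W t) - 2 * G t)) (at t)"
      unfolding D_def
      by (intro has_vector_derivative_mult has_vector_derivative_diff has_vector_derivative_cnj
          W G has_vector_derivative_const)
    then show ?thesis
      by (simp add: algebra_simps power2_eq_square)
  qed
  have cont: "continuous_on UNIV W" "continuous_on UNIV G"
    using has_vector_derivative_continuous[OF W] has_vector_derivative_continuous[OF G]
    by (simp_all add: continuous_at_imp_continuous_on)
  have "average (\<lambda>t. q t * G t) T
      = (cnj (average (\<lambda>t. q t * cnj (W t) ^ 2) T) - (1 / 2) *\<^sub>R ((1 / T) *\<^sub>R D T - (1 / T) *\<^sub>R D (- T))) / 2"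
    if "T > 0" for T
  proof -
    define IA where "IA = integral {-T..T} (\<lambda>t. q t * cnj (W t) ^ 2)"
    define IB where "IB = integral {-T..T} (\<lambda>t. q t * G t)"
    have "continuous_on {-T..T} (\<lambda>t. q t * cnj (W t) ^ 2)" "continuous_on {-T..T} (\<lambda>t. q t * G t)"
      using continuous_on_subset[OF q subset_UNIV] continuous_on_subset[OF cont(1) subset_UNIV]
        continuous_on_subset[OF cont(2) subset_UNIV]
      by (auto intro!: continuous_intros)
    then have int: "(\<lambda>t. q t * cnj (W t) ^ 2) integrable_on {-T..T}" "(\<lambda>t. q t * G t) integrable_on {-T..T}"
      by (simp_all add: integrable_continuous_real)
    have "((\<lambda>t. cnj (q t * cnj (W t) ^ 2) - 2 * (q t * G t)) has_integral (D T - D (- T))) {-T..T}"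
    proof (rule fundamental_theorem_of_calculus)
      show "- T \<le> T"
        using that by simp
      show "(D has_vector_derivative cnj (q t * cnj (W t) ^ 2) - 2 * (q t * G t)) (at t within {-T..T})" for t
        by (rule has_vector_derivative_at_within[OF D_der])
    qed
    then have "D T - D (- T) = integral {-T..T} (\<lambda>t. cnj (q t * cnj (W t) ^ 2) - 2 * (q t * G t))"
      by (rule integral_unique[symmetric])
    also have "\<dots> = integral {-T..T} (\<lambda>t. cnj (q t * cnj (W t) ^ 2)) - integral {-T..T} (\<lambda>t. 2 * (q t * G t))"
      using integrable_on_cnj_iff[THEN iffD2, OF int(1)] integrable_on_mult_right[OF int(2)]
      by (rule Henstock_Kurzweil_Integration.integral_diff)
    also have "\<dots> = cnj IA - 2 * IB"
      unfolding IA_def IB_def Henstock_Kurzweil_Integration.integral_cnj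
        Henstock_Kurzweil_Integration.integral_mult_right ..
    finally have "D T - D (- T) = cnj IA - 2 * IB" .
    then show ?thesis
      using that unfolding average_def IA_def[symmetric] IB_def[symmetric]
      by (simp add: complex_cnj_scaleR scaleR_conv_of_real field_simps)
  qed
  note average_eq = this
  have "eventually (\<lambda>T. (cnj (average (\<lambda>t. q t * cnj (W t) ^ 2) T)
      - (1 / 2) *\<^sub>R ((1 / T) *\<^sub>R D T - (1 / T) *\<^sub>R D (- T))) / 2 = average (\<lambda>t. q t * G t) T) at_top"
    using eventually_gt_at_top[of 0] by eventually_elim (rule average_eq[symmetric])
  moreover have "((\<lambda>T. (cnj (average (\<lambda>t. q t * cnj (W t) ^ 2) T)
      - (1 / 2) *\<^sub>R ((1 / T) *\<^sub>R D T - (1 / T) *\<^sub>R D (- T))) / 2) \<longlongrightarrow> (cnj c - (1 / 2) *\<^sub>R (0 - 0)) / 2) at_top"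
    unfolding D_def
    by (intro tendsto_intros A tendsto_cubic_quotient_zero[OF W_bound G_pos]
        tendsto_cubic_quotient_zero[of "\<lambda>T. W (- T)" K "\<lambda>T. G (- T)", OF W_bound G_neg]) simp_all
  ultimately show ?thesis
    by (simp add: tendsto_cong)
qed

theorem proposition4p1:
  fixes f :: "real \<Rightarrow> real" and Q0 Q1 :: "real \<Rightarrow> complex"
  assumes f_qp: "quasi_periodic f"
    and Q0_def: "Q0 = (\<lambda>t. exp (2 * \<i> * complex_of_real (integral0 f t)))"
    and Q1_def: "Q1 = (\<lambda>t. Q0 t * integral0
                        (\<lambda>\<tau>. inverse (Q0 \<tau>) - mean_value (\<lambda>s. inverse (Q0 s))) t)"
    and Q0_qp: "quasi_periodic Q0"
    and Q1_qp: "quasi_periodic Q1"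
    and M0: "mean_value Q0 = 0"
    and M1: "mean_value Q1 = 0"
  shows "mean_value (\<lambda>t. Q1 t * integral0 (\<lambda>\<tau>. cnj (Q0 \<tau>)) t)
           = 2 * cnj (mean_value (\<lambda>t. Q0 t * integral0 Q1 t))"
proof -
  have norm_Q0: "norm (Q0 t) = 1" and inverse_Q0: "inverse (Q0 t) = cnj (Q0 t)"
    and cnj_Q0: "cnj (Q0 t) * Q0 t = 1" for t
    by (simp_all add: Q0_def exp_minus[symmetric] exp_cnj flip: exp_add)
  have ap0: "fin_almost_periodic Q0" and ap1: "fin_almost_periodic Q1"
    using Q0_qp Q1_qp by (simp_all add: quasi_periodic_imp_fin_almost_periodic)
  then have cont: "continuous_on UNIV Q0" "continuous_on UNIV Q1"
    by (simp_all add: fin_almost_periodic_def)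
  have "(average (\<lambda>s. inverse (Q0 s)) \<longlongrightarrow> 0) at_top"
    using tendsto_cnj[OF fin_almost_periodic_mean(3)[OF ap0]] M0 by (simp add: inverse_Q0 average_cnj)
  define P where "P = integral0 (\<lambda>\<tau>. cnj (Q0 \<tau>))"
  have Q1_eq: "Q1 t = Q0 t * P t" for t
    unfolding Q1_def P_def mean_value_eqI[OF \<open>(average _ \<longlongrightarrow> 0) at_top\<close>] by (simp add: inverse_Q0)
  obtain B1 where "\<And>t. norm (Q1 t) \<le> B1"
    using ap1 unfolding fin_almost_periodic_def bounded_iff by auto
  then have W_bound: "norm (cnj (P t)) \<le> B1" for t
    by (simp add: Q1_eq norm_mult norm_Q0)
  have W: "((\<lambda>t. cnj (P t)) has_vector_derivative Q0 t) (at t)" for t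
    using has_vector_derivative_cnj[OF integral0_has_vector_derivative[of "\<lambda>\<tau>. cnj (Q0 \<tau>)"]] cont(1)
    unfolding P_def by (simp add: continuous_on_cnj)
  have G: "(integral0 Q1 has_vector_derivative Q0 t * cnj (cnj (P t))) (at t)" for t
    using integral0_has_vector_derivative[OF cont(2)] by (simp add: Q1_eq)
  define L where "L t = Q1 t * integral0 (\<lambda>\<tau>. cnj (Q0 \<tau>)) t" for t
  have "L = (\<lambda>t. Q1 t * (cnj (Q0 t) * Q1 t))"
    using cnj_Q0 by (simp add: L_def Q1_eq P_def fun_eq_iff algebra_simps)
  then have "fin_almost_periodic L"
    by (simp add: fin_almost_periodic_mult fin_almost_periodic_cnj ap0 ap1)
  moreover have "L = (\<lambda>t. Q0 t * cnj (cnj (P t)) ^ 2)"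
    by (simp add: L_def Q1_eq P_def fun_eq_iff power2_eq_square)
  ultimately have "(average (\<lambda>t. Q0 t * cnj (cnj (P t)) ^ 2) \<longlongrightarrow> mean_value L) at_top"
    using fin_almost_periodic_mean(3) by metis
  then have "(average (\<lambda>t. Q0 t * integral0 Q1 t) \<longlongrightarrow> cnj (mean_value L) / 2) at_top"
    using fin_almost_periodic_mean(1,2)[OF ap1] M1
    by (intro average_antiderivative_identity[OF cont(1) W W_bound G]) simp_all
  then have mean_rhs: "cnj (mean_value L) / 2 = mean_value (\<lambda>t. Q0 t * integral0 Q1 t)"
    by (rule mean_value_eqI[symmetric])
  have "mean_value L = 2 * cnj (cnj (mean_value L) / 2)"
    by simp
  also note mean_rhs
  finally show ?thesis
    by (simp only: L_def[abs_def])
qed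

end
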